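(* Let $G$ be a graph of order $n$ and let $(x_1,\ldots,x_n)$ be a unit eigenvector of the adjacency matrix of $G$ for the eigenvalue $\mu(G)$. If $u$ is a vertex with $x_u=\min\{x_1,\ldots,x_n\}$, then \[ \mu(G-u)\geq\mu(G)\,\frac{1-2x_u^2}{1-x_u^2}. \]
   Context: All graphs are finite and simple; $\mu(G)$ denotes the largest eigenvalue of the adjacency matrix of $G$; $G-u$ is the graph obtained from $G$ by deleting the vertex $u$; the eigenvector is indexed by the vertices of $G$. *)

theory Defs
  imports Complex_Main
begin

text \<open>A finite simple graph: finite vertex set V and an edge relation E that is
  symmetric and irreflexive on V.  Edges outside V are ignored.\<close>
definition simple_graph :: "'a set \<Rightarrow> ('a \<Rightarrow> 'a \<Rightarrow> bool) \<Rightarrow> bool" where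
  "simple_graph V E \<longleftrightarrow> finite V \<and> (\<forall>u\<in>V. \<forall>v\<in>V. E u v = E v u) \<and> (\<forall>v\<in>V. \<not> E v v)"

definition adj :: "('a \<Rightarrow> 'a \<Rightarrow> bool) \<Rightarrow> 'a \<Rightarrow> 'a \<Rightarrow> real" where
  "adj E u v = (if E u v then 1 else 0)"

definition is_eigenpair :: "'a set \<Rightarrow> ('a \<Rightarrow> 'a \<Rightarrow> bool) \<Rightarrow> real \<Rightarrow> ('a \<Rightarrow> real) \<Rightarrow> bool" where
  "is_eigenpair V E lam x \<longleftrightarrow>
     (\<exists>v\<in>V. x v \<noteq> 0) \<and> (\<forall>v\<in>V. (\<Sum>w\<in>V. adj E v w * x w) = lam * x v)"

definition mu :: "'a set \<Rightarrow> ('a \<Rightarrow> 'a \<Rightarrow> bool) \<Rightarrow> real" where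
  "mu V E = Max {lam. \<exists>x. is_eigenpair V E lam x}"

end

theory Submission
  imports Defs "HOL-Analysis.Function_Topology" "Jordan_Normal_Form.Spectral_Radius"
begin

text \<open>For the symmetric adjacency matrix \<open>A\<close> of a graph, \<open>\<mu>\<close> is the maximum of the
  Rayleigh quotient \<open>z\<^sup>T A z / z\<^sup>T z\<close>: a maximiser on the unit sphere exists by compactness,
  and the first variation of the quotient shows that it is an eigenvector.  Restricting the unit
  eigenvector \<open>x\<close> to \<open>V - {u}\<close> removes \<open>2 x\<^sub>u (A x)\<^sub>u = 2 \<mu> x\<^sub>u\<^sup>2\<close> from the quadratic form
  and \<open>x\<^sub>u\<^sup>2\<close> from the squared norm, so the Rayleigh quotient of \<open>G - u\<close> at this vector is
  \<open>\<mu> (1 - 2 x\<^sub>u\<^sup>2) / (1 - x\<^sub>u\<^sup>2)\<close>.\<close>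

definition quad_form :: "'a set \<Rightarrow> ('a \<Rightarrow> 'a \<Rightarrow> bool) \<Rightarrow> ('a \<Rightarrow> real) \<Rightarrow> real" where
  "quad_form W E y = (\<Sum>v\<in>W. \<Sum>w\<in>W. adj E v w * y v * y w)"

definition sq_norm :: "'a set \<Rightarrow> ('a \<Rightarrow> real) \<Rightarrow> real" where
  "sq_norm W y = (\<Sum>v\<in>W. (y v)\<^sup>2)"

lemma sq_norm_nonneg: "0 \<le> sq_norm W y"
  unfolding sq_norm_def by (simp add: sum_nonneg)

lemma sq_norm_eq_0_iff:
  assumes "finite W"
  shows "sq_norm W y = 0 \<longleftrightarrow> (\<forall>v\<in>W. y v = 0)"
  unfolding sq_norm_def using assms by (simp add: sum_nonneg_eq_0_iff)

lemma sq_norm_ge_square: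
  assumes "finite W" "v \<in> W"
  shows "(y v)\<^sup>2 \<le> sq_norm W y"
  unfolding sq_norm_def using assms by (intro member_le_sum) auto

lemma sq_norm_scale: "sq_norm W (\<lambda>v. c * y v) = c\<^sup>2 * sq_norm W y"
  unfolding sq_norm_def sum_distrib_left by (simp add: power_mult_distrib)

lemma quad_form_scale: "quad_form W E (\<lambda>v. c * y v) = c\<^sup>2 * quad_form W E y"
  unfolding quad_form_def sum_distrib_left by (intro sum.cong refl) (simp add: power2_eq_square mult_ac)

lemma sq_norm_restrict: "sq_norm W (restrict y W) = sq_norm W y"
  unfolding sq_norm_def by (intro sum.cong) auto

lemma quad_form_restrict: "quad_form W E (restrict y W) = quad_form W E y"
  unfolding quad_form_def by (intro sum.cong) auto

lemma sq_norm_indicator: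
  assumes "finite W" "w \<in> W"
  shows "sq_norm W (\<lambda>v. if v = w then 1 else 0) = 1"
proof -
  have "sq_norm W (\<lambda>v. if v = w then 1 else 0) = (\<Sum>v\<in>W. if v = w then 1 else 0)"
    unfolding sq_norm_def by (intro sum.cong refl) simp
  then show ?thesis using assms by simp
qed

lemma quad_form_indicator:
  assumes "finite W" "w \<in> W"
  shows "quad_form W E (\<lambda>v. if v = w then 1 else 0) = adj E w w"
proof -
  have "quad_form W E (\<lambda>v. if v = w then 1 else 0) = (\<Sum>v\<in>W. if v = w then adj E w w else 0)"
    unfolding quad_form_def
  proof (intro sum.cong refl)
    fix v
    show "(\<Sum>w'\<in>W. adj E v w' * (if v = w then 1 else 0) * (if w' = w then 1 else 0))
        = (if v = w then adj E w w else 0)"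
      using assms by (cases "v = w") (simp_all add: if_distrib[of "\<lambda>c. adj E w _ * c"] cong: if_cong)
  qed
  then show ?thesis using assms by simp
qed

lemma sq_norm_add_expansion:
  "sq_norm W (\<lambda>v. y v + t * r v) = sq_norm W y + 2 * t * (\<Sum>v\<in>W. r v * y v) + t\<^sup>2 * sq_norm W r"
  unfolding sq_norm_def sum_distrib_left sum.distrib[symmetric]
  by (intro sum.cong refl) (simp add: algebra_simps power2_eq_square)

lemma quad_form_add_expansion:
  assumes "\<forall>v\<in>W. \<forall>w\<in>W. E v w = E w v"
  shows "quad_form W E (\<lambda>v. y v + t * r v)
       = quad_form W E y + 2 * t * (\<Sum>v\<in>W. r v * (\<Sum>w\<in>W. adj E v w * y w)) + t\<^sup>2 * quad_form W E r"
proof -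
  have swap: "(\<Sum>v\<in>W. \<Sum>w\<in>W. adj E v w * y v * r w) = (\<Sum>v\<in>W. \<Sum>w\<in>W. adj E v w * r v * y w)"
    using assms by (subst sum.swap) (intro sum.cong refl, simp add: adj_def)
  have "quad_form W E (\<lambda>v. y v + t * r v) = (\<Sum>v\<in>W. \<Sum>w\<in>W. adj E v w * y v * y w
      + t * (adj E v w * r v * y w) + t * (adj E v w * y v * r w) + t\<^sup>2 * (adj E v w * r v * r w))"
    unfolding quad_form_def by (intro sum.cong refl) (simp add: algebra_simps power2_eq_square)
  also have "\<dots> = quad_form W E y + t * (\<Sum>v\<in>W. \<Sum>w\<in>W. adj E v w * r v * y w)
      + t * (\<Sum>v\<in>W. \<Sum>w\<in>W. adj E v w * y v * r w) + t\<^sup>2 * quad_form W E r"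
    unfolding quad_form_def by (simp only: sum.distrib sum_distrib_left[symmetric])
  also have "(\<Sum>v\<in>W. \<Sum>w\<in>W. adj E v w * r v * y w) = (\<Sum>v\<in>W. r v * (\<Sum>w\<in>W. adj E v w * y w))"
    unfolding sum_distrib_left by (intro sum.cong refl) (simp add: mult_ac)
  finally show ?thesis unfolding swap by (simp add: sum_distrib_left mult_ac)
qed

lemma quad_form_eigenpair:
  assumes "is_eigenpair V E lam x"
  shows "quad_form V E x = lam * sq_norm V x"
proof -
  have "quad_form V E x = (\<Sum>v\<in>V. x v * (\<Sum>w\<in>V. adj E v w * x w))"
    unfolding quad_form_def sum_distrib_left by (intro sum.cong refl) (simp add: mult_ac)
  also have "\<dots> = (\<Sum>v\<in>V. lam * (x v)\<^sup>2)"
    using assms unfolding is_eigenpair_def by (intro sum.cong refl) (simp add: power2_eq_square mult_ac)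
  finally show ?thesis by (simp add: sq_norm_def sum_distrib_left)
qed

lemma quad_form_remove_vertex:
  assumes "finite V" "u \<in> V" "\<forall>v\<in>V. E v u = E u v" "\<not> E u u"
  shows "quad_form V E x = quad_form (V - {u}) E x + 2 * x u * (\<Sum>w\<in>V - {u}. adj E u w * x w)"
proof -
  define W where "W = V - {u}"
  have fin: "finite W" and V: "V = insert u W" "u \<notin> W" using assms(1,2) by (auto simp: W_def)
  have col: "(\<Sum>v\<in>W. adj E v u * x v * x u) = x u * (\<Sum>w\<in>W. adj E u w * x w)"
    unfolding sum_distrib_left using assms(3) V by (intro sum.cong refl) (auto simp: adj_def)
  have row: "(\<Sum>w\<in>W. adj E u w * x u * x w) = x u * (\<Sum>w\<in>W. adj E u w * x w)"
    unfolding sum_distrib_left by (intro sum.cong refl) (simp add: mult_ac)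
  have "quad_form V E x = (adj E u u * x u * x u + (\<Sum>w\<in>W. adj E u w * x u * x w))
      + ((\<Sum>v\<in>W. adj E v u * x v * x u) + quad_form W E x)"
    unfolding quad_form_def V(1) sum.insert[OF fin V(2)] sum.distrib by (simp only: ac_simps)
  then show ?thesis using assms(4) col row unfolding W_def by (simp add: adj_def)
qed

lemma sq_norm_remove_vertex:
  assumes "finite V" "u \<in> V"
  shows "sq_norm (V - {u}) x = sq_norm V x - (x u)\<^sup>2"
  unfolding sq_norm_def using assms by (simp add: sum.remove)

lemma quad_form_eigenpair_remove_vertex:
  assumes "simple_graph V E" "is_eigenpair V E lam x" "u \<in> V"
  shows "quad_form (V - {u}) E x = lam * (sq_norm V x - 2 * (x u)\<^sup>2)"
proof -
  have fin: "finite V" and sym: "\<forall>v\<in>V. E v u = E u v" and irr: "\<not> E u u"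
    using assms(1,3) unfolding simple_graph_def by auto
  have "(\<Sum>w\<in>V. adj E u w * x w) = lam * x u"
    using assms(2,3) unfolding is_eigenpair_def by blast
  then have row: "(\<Sum>w\<in>V - {u}. adj E u w * x w) = lam * x u"
    using fin assms(3) irr by (simp add: sum.remove adj_def)
  have "quad_form (V - {u}) E x = quad_form V E x - 2 * x u * (\<Sum>w\<in>V - {u}. adj E u w * x w)"
    using quad_form_remove_vertex[OF fin assms(3) sym irr, of x] by simp
  also have "\<dots> = lam * (sq_norm V x - 2 * (x u)\<^sup>2)"
    unfolding quad_form_eigenpair[OF assms(2)] row by (simp add: algebra_simps power2_eq_square)
  finally show ?thesis .
qed

definition adj_mat :: "('a \<Rightarrow> 'a \<Rightarrow> bool) \<Rightarrow> 'a list \<Rightarrow> real mat" where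
  "adj_mat E ws = mat (length ws) (length ws) (\<lambda>(i, j). adj E (ws ! i) (ws ! j))"

lemma eigenpair_imp_eigenvalue_adj_mat:
  assumes ws: "distinct ws" "set ws = W" and eig: "is_eigenpair W E lam x"
  shows "eigenvalue (adj_mat E ws) lam"
proof -
  define n where "n = length ws"
  define A where "A = adj_mat E ws"
  define xv where "xv = vec n (\<lambda>i. x (ws ! i))"
  have A: "A \<in> carrier_mat n n" unfolding A_def adj_mat_def n_def by simp
  have reindex: "(\<Sum>j<n. g (ws ! j)) = (\<Sum>w\<in>W. g w)" for g :: "'a \<Rightarrow> real"
    using sum.reindex_bij_betw[OF bij_betw_nth[OF ws(1) refl ws(2)[symmetric]]] n_def by simp
  obtain v where v: "v \<in> W" "x v \<noteq> 0" using eig unfolding is_eigenpair_def by blast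
  then obtain i where "i < n" "ws ! i = v" using ws n_def by (metis in_set_conv_nth)
  then have "xv $ i \<noteq> 0" using v by (simp add: xv_def)
  then have "xv \<noteq> 0\<^sub>v n" using \<open>i < n\<close> by auto
  moreover have "A *\<^sub>v xv = lam \<cdot>\<^sub>v xv"
  proof (rule eq_vecI)
    fix i assume "i < dim_vec (lam \<cdot>\<^sub>v xv)"
    then have i: "i < n" by (simp add: xv_def)
    have "(A *\<^sub>v xv) $ i = (\<Sum>w\<in>W. adj E (ws ! i) w * x w)"
      using i A unfolding A_def adj_mat_def xv_def n_def[symmetric] reindex[symmetric]
      by (simp add: scalar_prod_def atLeast0LessThan)
    also have "\<dots> = lam * x (ws ! i)" using eig i ws n_def unfolding is_eigenpair_def by (metis nth_mem)
    finally show "(A *\<^sub>v xv) $ i = (lam \<cdot>\<^sub>v xv) $ i" using i by (simp add: xv_def)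
  qed (use A in \<open>simp add: xv_def\<close>)
  ultimately have "eigenvector A xv lam"
    using A unfolding eigenvector_def by (simp add: xv_def)
  then show ?thesis unfolding eigenvalue_def A_def by blast
qed

lemma finite_eigenvalues:
  assumes "finite W"
  shows "finite {lam. \<exists>x. is_eigenpair W E lam x}"
proof -
  obtain ws where ws: "distinct ws" "set ws = W" using finite_distinct_list[OF assms] by blast
  have "{lam. \<exists>x. is_eigenpair W E lam x} \<subseteq> spectrum (adj_mat E ws)"
    using eigenpair_imp_eigenvalue_adj_mat[OF ws] unfolding spectrum_def by blast
  moreover have "adj_mat E ws \<in> carrier_mat (length ws) (length ws)" by (simp add: adj_mat_def)
  ultimately show ?thesis using card_finite_spectrum(1) finite_subset by blast
qed

lemma eigenvalue_le_mu:
  assumes "finite W" "is_eigenpair W E lam x"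
  shows "lam \<le> mu W E"
  unfolding mu_def using assms finite_eigenvalues[OF assms(1), of E] by (intro Max_ge) auto

lemma le_0_if_quadratic_nonpos:
  fixes S G :: real
  assumes "\<And>t. t > 0 \<Longrightarrow> 2 * t * S + t\<^sup>2 * G \<le> 0"
  shows "S \<le> 0"
proof (rule ccontr)
  assume "\<not> S \<le> 0"
  define t where "t = S / (\<bar>G\<bar> + 1)"
  have t: "t > 0" unfolding t_def using \<open>\<not> S \<le> 0\<close> by (simp add: add_pos_nonneg)
  have "t * (2 * S + t * G) \<le> 0" using assms[OF t] by (simp add: algebra_simps power2_eq_square)
  then have "2 * S \<le> - (t * G)" using t by (simp add: mult_le_0_iff)
  also have "\<dots> \<le> t * \<bar>G\<bar>" using mult_left_mono[OF abs_ge_minus_self[of G], of t] t by simp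
  also have "\<dots> < S" using \<open>\<not> S \<le> 0\<close> unfolding t_def by (simp add: field_simps)
  finally show False using \<open>\<not> S \<le> 0\<close> by simp
qed

lemma quad_form_attains_max_on_unit_sphere:
  assumes fin: "finite W" and ne: "W \<noteq> {}"
  obtains y where "sq_norm W y = 1" "\<And>z. sq_norm W z = 1 \<Longrightarrow> quad_form W E z \<le> quad_form W E y"
proof -
  define X where "X = product_topology (\<lambda>_::'a. euclideanreal) W"
  define K where "K = {y \<in> topspace X. sq_norm W y \<in> {1}} \<inter> PiE W (\<lambda>_. {-1..1::real})"
  have "continuous_map X euclideanreal (\<lambda>y. sq_norm W y)"
    unfolding sq_norm_def X_def
    by (intro continuous_map_sum continuous_map_real_pow continuous_map_product_projection fin) auto
  then have "closedin X {y \<in> topspace X. sq_norm W y \<in> {1}}"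
    by (rule closedin_continuous_map_preimage) simp
  moreover have "compactin X (PiE W (\<lambda>_. {-1..1::real}))"
    unfolding X_def by (simp add: compactin_PiE)
  ultimately have K: "compactin X K" unfolding K_def by (rule closed_Int_compactin)
  have cQ: "continuous_map X euclideanreal (\<lambda>y. quad_form W E y)"
    unfolding quad_form_def X_def
    by (intro continuous_map_sum continuous_map_real_mult continuous_map_product_projection fin)
       (auto simp: continuous_map_const)
  have cK: "compact (quad_form W E ` K)"
    using image_compactin[OF K cQ] by simp
  have unit_in_K: "restrict z W \<in> K" if z: "sq_norm W z = 1" for z
  proof -
    have "\<bar>z v\<bar> \<le> 1" if "v \<in> W" for v
      using sq_norm_ge_square[OF fin that, of z] z by (simp add: abs_square_le_1)
    then show ?thesis unfolding K_def X_def using z by (auto simp: sq_norm_restrict abs_le_iff)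
  qed
  obtain w where "w \<in> W" using ne by blast
  then have "quad_form W E ` K \<noteq> {}"
    using unit_in_K[OF sq_norm_indicator[OF fin]] by blast
  from compact_attains_sup[OF cK this] obtain y
    where y: "y \<in> K" and ymax: "\<And>t. t \<in> K \<Longrightarrow> quad_form W E t \<le> quad_form W E y"
    by auto
  show ?thesis
  proof
    show "sq_norm W y = 1" using y K_def by auto
    show "quad_form W E z \<le> quad_form W E y" if "sq_norm W z = 1" for z
      using ymax[OF unit_in_K[OF that]] by (simp add: quad_form_restrict)
  qed
qed

lemma quad_form_le_max_mult_sq_norm:
  assumes "finite W" "W \<noteq> {}"
  obtains y where "sq_norm W y = 1" "\<And>z. quad_form W E z \<le> quad_form W E y * sq_norm W z"
proof -
  obtain y where y: "sq_norm W y = 1" and ymax: "\<And>z. sq_norm W z = 1 \<Longrightarrow> quad_form W E z \<le> quad_form W E y"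
    using quad_form_attains_max_on_unit_sphere[OF assms] by blast
  have "quad_form W E z \<le> quad_form W E y * sq_norm W z" for z
  proof (cases "sq_norm W z = 0")
    case True
    then have "quad_form W E z = 0" using sq_norm_eq_0_iff[OF assms(1)] by (simp add: quad_form_def)
    then show ?thesis using True by simp
  next
    case False
    then have pos: "sq_norm W z > 0" using sq_norm_nonneg[of W z] by linarith
    define c where "c = 1 / sqrt (sq_norm W z)"
    have c2: "c\<^sup>2 * sq_norm W z = 1" using pos by (simp add: c_def power_divide)
    have "quad_form W E z = c\<^sup>2 * quad_form W E z * sq_norm W z"
      using c2 by (simp add: algebra_simps)
    also have "\<dots> \<le> quad_form W E y * sq_norm W z"
      using ymax[of "\<lambda>v. c * z v"] c2 pos by (intro mult_right_mono) (simp_all add: quad_form_scale sq_norm_scale)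
    finally show ?thesis .
  qed
  then show ?thesis using that y by blast
qed

lemma quad_form_maximizer_is_eigenpair:
  assumes sym: "\<forall>v\<in>W. \<forall>w\<in>W. E v w = E w v" and fin: "finite W"
    and y: "sq_norm W y = 1" and max: "\<And>z. quad_form W E z \<le> quad_form W E y * sq_norm W z"
  shows "is_eigenpair W E (quad_form W E y) y"
proof -
  define lam where "lam = quad_form W E y"
  define A where "A v = (\<Sum>w\<in>W. adj E v w * y w)" for v
  define r where "r v = A v - lam * y v" for v
  \<comment> \<open>Perturbing \<open>y\<close> in the direction \<open>r = A y - \<lambda> y\<close> would increase the quotient unless \<open>r = 0\<close>.\<close>
  have "(\<Sum>v\<in>W. r v * A v) - lam * (\<Sum>v\<in>W. r v * y v) = (\<Sum>v\<in>W. r v * (A v - lam * y v))"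
    by (simp add: sum_subtractf sum_distrib_left right_diff_distrib mult.left_commute)
  also have "\<dots> = sq_norm W r" unfolding sq_norm_def by (simp add: r_def power2_eq_square)
  finally have cross: "(\<Sum>v\<in>W. r v * A v) - lam * (\<Sum>v\<in>W. r v * y v) = sq_norm W r" .
  have "2 * t * sq_norm W r + t\<^sup>2 * (quad_form W E r - lam * sq_norm W r) \<le> 0" for t
  proof -
    have "quad_form W E (\<lambda>v. y v + t * r v) \<le> quad_form W E y * sq_norm W (\<lambda>v. y v + t * r v)"
      by (rule max)
    then show ?thesis
      unfolding quad_form_add_expansion[OF sym] sq_norm_add_expansion A_def[symmetric] cross[symmetric]
      using y lam_def by (simp add: algebra_simps)
  qed
  then have "sq_norm W r \<le> 0" by (rule le_0_if_quadratic_nonpos)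
  then have "\<forall>v\<in>W. r v = 0" using sq_norm_nonneg[of W r] sq_norm_eq_0_iff[OF fin] by simp
  moreover have "\<exists>v\<in>W. y v \<noteq> 0"
  proof (rule ccontr)
    assume "\<not> (\<exists>v\<in>W. y v \<noteq> 0)"
    then have "sq_norm W y = 0" using sq_norm_eq_0_iff[OF fin] by auto
    then show False using y by simp
  qed
  ultimately show ?thesis unfolding is_eigenpair_def r_def A_def lam_def by simp
qed

lemma mu_ge_rayleigh_quotient:
  assumes "simple_graph W E" "W \<noteq> {}"
  shows "quad_form W E z / sq_norm W z \<le> mu W E"
proof -
  have fin: "finite W" and sym: "\<forall>v\<in>W. \<forall>w\<in>W. E v w = E w v" and irr: "\<forall>w\<in>W. \<not> E w w"
    using assms(1) unfolding simple_graph_def by auto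
  obtain y where y: "sq_norm W y = 1" and max: "\<And>z. quad_form W E z \<le> quad_form W E y * sq_norm W z"
    using quad_form_le_max_mult_sq_norm[OF fin assms(2)] by blast
  have "quad_form W E y \<le> mu W E"
    by (rule eigenvalue_le_mu[OF fin quad_form_maximizer_is_eigenpair[OF sym fin y max]])
  moreover have "quad_form W E z / sq_norm W z \<le> quad_form W E y"
  proof (cases "sq_norm W z = 0")
    case True
    \<comment> \<open>the quotient is a division by zero, hence \<open>0\<close>; compare with a unit basis vector\<close>
    obtain w where "w \<in> W" using assms(2) by blast
    then have "0 \<le> quad_form W E y"
      using max[of "\<lambda>v. if v = w then 1 else 0"] fin irr
      by (simp add: quad_form_indicator sq_norm_indicator adj_def)
    then show ?thesis using True by simp
  next
    case False
    then have "sq_norm W z > 0" using sq_norm_nonneg[of W z] by linarith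
    then show ?thesis using max[of z] by (simp add: pos_divide_le_eq)
  qed
  ultimately show ?thesis by linarith
qed

theorem lemma2:
  fixes V :: "'a set" and E :: "'a \<Rightarrow> 'a \<Rightarrow> bool" and x :: "'a \<Rightarrow> real" and u :: 'a
  assumes "simple_graph V E"
    and "card V \<ge> 2"
    and "is_eigenpair V E (mu V E) x"
    and "(\<Sum>v\<in>V. (x v)\<^sup>2) = 1"
    and "u \<in> V"
    and "x u = Min (x ` V)"
  shows "mu (V - {u}) E \<ge> mu V E * (1 - 2 * (x u)\<^sup>2) / (1 - (x u)\<^sup>2)"
proof -
  have fin: "finite V" using assms(1) unfolding simple_graph_def by blast
  have "card (V - {u}) \<ge> 1" using fin assms(2,5) by simp
  then have "V - {u} \<noteq> {}" by (metis card.empty not_one_le_zero)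
  moreover have "simple_graph (V - {u}) E" using assms(1) unfolding simple_graph_def by auto
  moreover have "quad_form (V - {u}) E x = mu V E * (1 - 2 * (x u)\<^sup>2)"
    using quad_form_eigenpair_remove_vertex[OF assms(1,3,5)] assms(4) by (simp add: sq_norm_def)
  moreover have "sq_norm (V - {u}) x = 1 - (x u)\<^sup>2"
    using sq_norm_remove_vertex[OF fin assms(5)] assms(4) by (simp add: sq_norm_def)
  ultimately show ?thesis using mu_ge_rayleigh_quotient[of "V - {u}" E x] by simp
qed

end
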